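(* Consider the 2-node network game with $\pi^M=W_{con}$, $a_1=a_2=a>0$, $c_1=c_2=c>0$, $b_1>b_2>0$, and line capacity $f_{12}\ge a/(b_2+2c)$ (possibly $f_{12}=\infty$). Then the following triple is a GNE: $$q_2^*=r^*=\frac{a}{b_2+2c},\qquad q_1^*=\begin{cases}\dfrac{a(2c+b_2-b_1)}{2(b_1+c)(b_2+2c)}, & \text{if } b_1<b_2+2c,\\[2mm] 0, & \text{otherwise}.\end{cases}$$
   Context: 2-node network game. There are generators $G_1,G_2$. Generator $k$ chooses $q_k\ge 0$ and has profit $\pi^G_k=q_kp_k(q_k+r_k)-c_kq_k^2$, where $p_k(d)=a_k-b_kd$. The market maker chooses $r\in\mathbb{R}$ and sets $r_1=r$, $r_2=-r$, subject to $-q_1\le r\le q_2$ and $-f_{12}\le r\le f_{12}$. Consumer surplus objective. The market maker maximizes $$W_{con}(q,r)=\sum_k\Big(\int_0^{q_k+r_k}p_k(w)dw-(q_k+r_k)p_k(q_k+r_k)\Big).$$ GNE. A triple $(q_1^*,q_2^*,r^* )$ with $r^*$ feasible given $q^*$ is a GNE if both of the following hold: - each $q_k^*$ maximizes $\pi^G_k$ over $q_k\ge0$, given the other generator's quantity and $r^*$; - $r^*$ maximizes $W_{con}(q^*,\cdot)$ over the feasible set determined by $q^*$. *)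

theory Defs
  imports "HOL-Analysis.Analysis" "HOL-Library.Extended_Real"
begin

definition price :: "(nat \<Rightarrow> real) \<Rightarrow> (nat \<Rightarrow> real) \<Rightarrow> nat \<Rightarrow> real \<Rightarrow> real" where
  "price a b k d = a k - b k * d"

definition rflow :: "real \<Rightarrow> nat \<Rightarrow> real" where
  "rflow r k = (if k = 1 then r else - r)"

definition gen_profit ::
  "(nat \<Rightarrow> real) \<Rightarrow> (nat \<Rightarrow> real) \<Rightarrow> (nat \<Rightarrow> real) \<Rightarrow> nat \<Rightarrow> real \<Rightarrow> real \<Rightarrow> real" where
  "gen_profit a b c k qk r = qk * price a b k (qk + rflow r k) - c k * qk^2"

definition W_con ::
  "(nat \<Rightarrow> real) \<Rightarrow> (nat \<Rightarrow> real) \<Rightarrow> real \<Rightarrow> real \<Rightarrow> real \<Rightarrow> real" where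
  "W_con a b q1 q2 r =
     (\<Sum>k\<in>{1,2::nat}.
        (let d = (if k = 1 then q1 else q2) + rflow r k in
          integral {0..d} (price a b k) - d * price a b k d))"

definition feasible_r :: "ereal \<Rightarrow> real \<Rightarrow> real \<Rightarrow> real \<Rightarrow> bool" where
  "feasible_r f q1 q2 r \<longleftrightarrow> - q1 \<le> r \<and> r \<le> q2 \<and> - f \<le> ereal r \<and> ereal r \<le> f"

definition is_GNE ::
  "(nat \<Rightarrow> real) \<Rightarrow> (nat \<Rightarrow> real) \<Rightarrow> (nat \<Rightarrow> real) \<Rightarrow> ereal \<Rightarrow> real \<Rightarrow> real \<Rightarrow> real \<Rightarrow> bool" where
  "is_GNE a b c f q1 q2 r \<longleftrightarrow>
     q1 \<ge> 0 \<and> q2 \<ge> 0 \<and> feasible_r f q1 q2 r \<and>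
     (\<forall>x\<ge>0. gen_profit a b c 1 x r \<le> gen_profit a b c 1 q1 r) \<and>
     (\<forall>x\<ge>0. gen_profit a b c 2 x r \<le> gen_profit a b c 2 q2 r) \<and>
     (\<forall>r'. feasible_r f q1 q2 r' \<longrightarrow> W_con a b q1 q2 r' \<le> W_con a b q1 q2 r)"

end

theory Submission
  imports Defs
begin

text \<open>Each generator faces a concave quadratic profit in its own quantity, so its best
  response is the truncated vertex; with \<open>r = q\<^sub>2\<close> the two vertices are exactly
  \<open>q\<^sub>1\<^sup>*\<close> and \<open>q\<^sub>2\<^sup>*\<close>. On its feasible interval the consumer surplus is
  \<open>b\<^sub>1 d\<^sup>2/2 + b\<^sub>2 (T - d)\<^sup>2/2\<close> with \<open>d = q\<^sub>1 + r\<close> and \<open>T = q\<^sub>1 + q\<^sub>2\<close>, a convex function of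
  \<open>d \<in> [0, T]\<close> whose maximum is at \<open>d = T\<close> because \<open>b\<^sub>1 > b\<^sub>2\<close>: all supply is routed
  to the steeper market, i.e. \<open>r = q\<^sub>2\<close>.\<close>

lemma quadratic_le_at_truncated_vertex:
  fixes k m x :: real
  assumes "k > 0" and "x \<ge> 0"
  shows "x * m - k * x\<^sup>2 \<le> max 0 (m / (2 * k)) * m - k * (max 0 (m / (2 * k)))\<^sup>2"
proof (cases "m \<ge> 0")
  case True
  define v where "v = m / (2 * k)"
  have "m = 2 * k * v" using \<open>k > 0\<close> unfolding v_def by simp
  then have "v * m - k * v\<^sup>2 - (x * m - k * x\<^sup>2) = k * (x - v)\<^sup>2"
    by (simp add: power2_eq_square algebra_simps)
  moreover have "k * (x - v)\<^sup>2 \<ge> 0" using \<open>k > 0\<close> by simp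
  moreover have "max 0 v = v" using True \<open>k > 0\<close> unfolding v_def by simp
  ultimately show ?thesis unfolding v_def by simp
next
  case False
  then have "max 0 (m / (2 * k)) = 0" using \<open>k > 0\<close> by (simp add: divide_nonpos_pos)
  moreover have "x * m \<le> 0" using False \<open>x \<ge> 0\<close> by (simp add: mult_nonneg_nonpos)
  moreover have "k * x\<^sup>2 \<ge> 0" using \<open>k > 0\<close> by simp
  ultimately show ?thesis by simp
qed

lemma gen_profit_eq_quadratic:
  "gen_profit a b c k y r = y * price a b k (rflow r k) - (b k + c k) * y\<^sup>2"
  unfolding gen_profit_def price_def by (simp add: power2_eq_square algebra_simps)

lemma gen_profit_le_best_response:
  assumes "b k + c k > 0" and "x \<ge> 0"
  shows "gen_profit a b c k x r
    \<le> gen_profit a b c k (max 0 (price a b k (rflow r k) / (2 * (b k + c k)))) r"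
  unfolding gen_profit_eq_quadratic using quadratic_le_at_truncated_vertex[OF assms] .

lemma linear_demand_surplus:
  fixes d :: real
  assumes "d \<ge> 0"
  shows "integral {0..d} (price a b k) - d * price a b k d = b k * d\<^sup>2 / 2"
proof -
  have "((\<lambda>w. a k - b k * w) has_integral (d * a k - b k * (d\<^sup>2 / 2))) {0..d}"
    using has_integral_diff[OF has_integral_const_real[of "a k" 0 d]
        has_integral_mult_right[OF ident_has_integral[OF assms], of "b k"]] assms
    by simp
  then have "integral {0..d} (price a b k) = d * a k - b k * (d\<^sup>2 / 2)"
    unfolding price_def by (simp add: integral_unique)
  then show ?thesis unfolding price_def by (simp add: power2_eq_square algebra_simps)
qed

lemma W_con_eq_on_feasible:
  assumes "- q1 \<le> r" and "r \<le> q2"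
  shows "W_con a b q1 q2 r = b 1 * (q1 + r)\<^sup>2 / 2 + b 2 * (q2 - r)\<^sup>2 / 2"
  using assms linear_demand_surplus[of "q1 + r" a b 1] linear_demand_surplus[of "q2 - r" a b 2]
  unfolding W_con_def rflow_def by (simp add: Let_def)

lemma weighted_squares_le_at_endpoint:
  fixes \<alpha> \<beta> d T :: real
  assumes "0 \<le> \<beta>" and "\<beta> \<le> \<alpha>" and "0 \<le> d" and "d \<le> T"
  shows "\<alpha> * d\<^sup>2 + \<beta> * (T - d)\<^sup>2 \<le> \<alpha> * T\<^sup>2"
proof -
  have "\<alpha> * d\<^sup>2 \<le> \<alpha> * (d * T)"
    using assms by (intro mult_left_mono) (auto simp: power2_eq_square intro: mult_left_mono)
  moreover have "\<beta> * (T - d)\<^sup>2 \<le> \<alpha> * ((T - d) * T)"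
  proof -
    have "\<beta> * (T - d)\<^sup>2 \<le> \<beta> * ((T - d) * T)"
      using assms by (intro mult_left_mono) (auto simp: power2_eq_square intro: mult_left_mono)
    also have "\<dots> \<le> \<alpha> * ((T - d) * T)"
      using assms by (intro mult_right_mono) auto
    finally show ?thesis .
  qed
  ultimately show ?thesis by (simp add: power2_eq_square algebra_simps)
qed

lemma W_con_le_full_export:
  assumes "0 \<le> b 2" and "b 2 \<le> b 1" and "- q1 \<le> r" and "r \<le> q2"
  shows "W_con a b q1 q2 r \<le> W_con a b q1 q2 q2"
proof -
  have "b 1 * (q1 + r)\<^sup>2 + b 2 * ((q1 + q2) - (q1 + r))\<^sup>2 \<le> b 1 * (q1 + q2)\<^sup>2"
    using assms by (intro weighted_squares_le_at_endpoint) auto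
  then show ?thesis
    using assms by (simp add: W_con_eq_on_feasible)
qed

lemma feasible_r_full_export:
  assumes "q1 \<ge> 0" and "q2 \<ge> 0" and "ereal q2 \<le> f"
  shows "feasible_r f q1 q2 q2"
proof -
  have "- f \<le> 0" using assms by (metis ereal_less_eq(5) ereal_uminus_le_0_iff order_trans)
  also have "0 \<le> ereal q2" using assms by simp
  finally show ?thesis unfolding feasible_r_def using assms by auto
qed

theorem mainTheorem5:
  fixes a b c :: "nat \<Rightarrow> real" and A C :: real and f :: ereal
  assumes "A > 0" and "C > 0"
    and "a 1 = A" and "a 2 = A" and "c 1 = C" and "c 2 = C"
    and "b 1 > b 2" and "b 2 > 0"
    and "f \<ge> ereal (A / (b 2 + 2 * C))"
  shows "is_GNE a b c f
           (if b 1 < b 2 + 2 * C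
            then A * (2 * C + b 2 - b 1) / (2 * (b 1 + C) * (b 2 + 2 * C)) else 0)
           (A / (b 2 + 2 * C))
           (A / (b 2 + 2 * C))"
proof -
  define s where "s = A / (b 2 + 2 * C)"
  have A_eq: "A = s * (b 2 + 2 * C)" and s_pos: "s > 0"
    using assms unfolding s_def by (auto intro: divide_pos_pos)
  have price1: "price a b 1 (rflow s 1) = s * (b 2 + 2 * C - b 1)"
    unfolding price_def rflow_def using assms A_eq by (simp add: algebra_simps)
  have vertex1: "s * (b 2 + 2 * C - b 1) / (2 * (b 1 + C))
      = A * (2 * C + b 2 - b 1) / (2 * (b 1 + C) * (b 2 + 2 * C))"
    using assms unfolding s_def by (simp add: field_simps)
  define q1 where "q1 = (if b 1 < b 2 + 2 * C
    then A * (2 * C + b 2 - b 1) / (2 * (b 1 + C) * (b 2 + 2 * C)) else 0)"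
  have br1: "max 0 (price a b 1 (rflow s 1) / (2 * (b 1 + c 1))) = q1"
    using assms s_pos unfolding price1 q1_def vertex1[symmetric]
    by (auto simp: max_def zero_le_divide_iff zero_le_mult_iff)
  have br2: "max 0 (price a b 2 (rflow s 2) / (2 * (b 2 + c 2))) = s"
    using assms s_pos unfolding price_def rflow_def A_eq by (simp add: field_simps)
  have q1_nonneg: "q1 \<ge> 0" unfolding br1[symmetric] by simp
  have "ereal s \<le> f" using assms(9) unfolding s_def .
  then have "feasible_r f q1 s s"
    using q1_nonneg s_pos by (intro feasible_r_full_export) auto
  moreover have "gen_profit a b c 1 x s \<le> gen_profit a b c 1 q1 s" if "x \<ge> 0" for x
    using that assms
      gen_profit_le_best_response[where a = a and b = b and c = c and k = 1 and x = x and r = s]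
    unfolding br1 by simp
  moreover have "gen_profit a b c 2 x s \<le> gen_profit a b c 2 s s" if "x \<ge> 0" for x
    using that assms
      gen_profit_le_best_response[where a = a and b = b and c = c and k = 2 and x = x and r = s]
    unfolding br2 by simp
  moreover have "W_con a b q1 s r \<le> W_con a b q1 s s" if "feasible_r f q1 s r" for r
    using that assms by (intro W_con_le_full_export) (auto simp: feasible_r_def)
  ultimately show ?thesis
    using q1_nonneg s_pos unfolding is_GNE_def q1_def s_def by auto
qed

end
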